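(* Let $L, w \in \mathbb{N}$ with $w \ge 1$ and $L \ge w-1$, let $m,n\in\mathbb{N}$, and let $R(x)=\sum_{d=1}^{d_{\max}} R_d x^d$ with $R_d\ge 0$ and $R(1)=1$. In the $(\lambda(x),R(x),L,w)$ spatially coupled LDGM ensemble described below (whose underlying ensemble has $n$ generator nodes and $m$ information bits), the design rate equals $$ r=\frac{mL}{\,n (L - w + 1) + 2n\sum_{i=1}^{w-1} \bigl(1 - R(\tfrac{i}{w})\bigr)}. $$
   Context: Spatially coupled LDGM ensemble: information bits are placed at positions $0,1,\dots,L-1$, with $m$ information bits at each position. Generator nodes are placed at positions $0,1,\dots,L+w-2$, with $n$ generator nodes at each position. Each generator node at position $j$ independently chooses a degree $d$ with probability $R_d$, and each of its $d$ edges independently chooses a position uniformly from $\{j-w+1,\dots,j\}$ and then an information bit (of the $mw$ bits in that window) at that position. Edges whose chosen position lies outside $[0,L-1]$ are omitted (equivalently, they connect to known bits of value $0$). The information-node degree distribution $\lambda(x)$ plays no role in this claim. The design rate is defined as the total number $mL$ of information bits divided by the expected number of generator nodes that are connected to at least one information bit at a position in $[0,L-1]$. *)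

theory Defs
  imports "HOL-Probability.Probability"
begin

definition Rpoly :: "(nat \<Rightarrow> real) \<Rightarrow> nat \<Rightarrow> real \<Rightarrow> real" where
  "Rpoly R dmax x = (\<Sum>d = 1..dmax. R d * x ^ d)"

definition degree_pmf :: "(nat \<Rightarrow> real) \<Rightarrow> nat \<Rightarrow> nat pmf" where
  "degree_pmf R dmax = embed_pmf (\<lambda>d. if d \<in> {1..dmax} then R d else 0)"

text \<open>The outcome is (d, f) where f k is the position chosen by edge k < d.
  (The choice of the information bit inside a position does not affect whether
  the edge lands in [0, L-1], hence it is not modelled.)\<close>
definition gen_pmf :: "(nat \<Rightarrow> real) \<Rightarrow> nat \<Rightarrow> nat \<Rightarrow> int \<Rightarrow> (nat \<times> (nat \<Rightarrow> int)) pmf" where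
  "gen_pmf R dmax w j =
     bind_pmf (degree_pmf R dmax)
       (\<lambda>d. map_pmf (\<lambda>f. (d, f))
              (Pi_pmf {..<d} 0 (\<lambda>_. pmf_of_set {j - int w + 1 .. j})))"

definition connected_event :: "nat \<Rightarrow> (nat \<times> (nat \<Rightarrow> int)) set" where
  "connected_event L = {(d, f). \<exists>k<d. f k \<in> {0 .. int L - 1}}"

definition expected_connected :: "nat \<Rightarrow> (nat \<Rightarrow> real) \<Rightarrow> nat \<Rightarrow> nat \<Rightarrow> nat \<Rightarrow> real" where
  "expected_connected n R dmax L w =
     (\<Sum>j \<in> {0 .. int L + int w - 2}.
        real n * measure_pmf.prob (gen_pmf R dmax w j) (connected_event L))"

definition design_rate :: "nat \<Rightarrow> nat \<Rightarrow> (nat \<Rightarrow> real) \<Rightarrow> nat \<Rightarrow> nat \<Rightarrow> nat \<Rightarrow> real" where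
  "design_rate m n R dmax L w = real (m * L) / expected_connected n R dmax L w"

end

theory Submission imports Defs begin

text \<open>A generator at position j picks each of its d edge positions uniformly from a window of w
  positions, of which c_j lie in [0, L-1]; it misses them all with probability (1 - c_j/w)^d, so
  averaging over the degree it is connected with probability 1 - R(1 - c_j/w). The overlap c_j grows
  as 1, ..., w-1 at the left boundary, stays w in the L-w+1 interior positions (where R(0) = 0 makes
  the generator surely connected), and falls back w-1, ..., 1 at the right boundary; reflecting
  c \<mapsto> w - c turns the two boundary sums into the sum of 1 - R(i/w).\<close>

lemma measure_pmf_bind_finite_support:
  assumes "finite (set_pmf M)"
  shows "measure_pmf.prob (M \<bind> N) X = (\<Sum>x\<in>set_pmf M. pmf M x * measure_pmf.prob (N x) X)"
proof -
  have "emeasure (measure_pmf (M \<bind> N)) X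
      = (\<Sum>x\<in>set_pmf M. ennreal (measure_pmf.prob (N x) X) * ennreal (pmf M x))"
    unfolding emeasure_bind_pmf
    by (subst nn_integral_measure_pmf_finite[OF assms]) (auto simp: measure_pmf.emeasure_eq_measure)
  also have "\<dots> = ennreal (\<Sum>x\<in>set_pmf M. pmf M x * measure_pmf.prob (N x) X)"
    by (subst sum_ennreal[symmetric]) (auto simp: ennreal_mult mult.commute intro!: sum.cong)
  finally show ?thesis
    by (simp add: measure_pmf.emeasure_eq_measure sum_nonneg)
qed

lemma measure_Pi_pmf_ex_in:
  assumes "finite I"
  shows "measure_pmf.prob (Pi_pmf I dflt (\<lambda>_. p)) {f. \<exists>k\<in>I. f k \<in> S}
       = 1 - (1 - measure_pmf.prob p S) ^ card I"
proof -
  have events: "{f. \<exists>k\<in>I. f k \<in> S} = UNIV - Pi I (\<lambda>_. - S)"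
    by (auto simp: Pi_def)
  have "measure_pmf.prob p (- S) = 1 - measure_pmf.prob p S"
    using measure_pmf.prob_compl[of S p] by (simp add: Compl_eq_Diff_UNIV)
  then have "measure_pmf.prob (Pi_pmf I dflt (\<lambda>_. p)) (Pi I (\<lambda>_. - S))
      = (1 - measure_pmf.prob p S) ^ card I"
    using assms by (simp add: measure_Pi_pmf_Pi)
  then show ?thesis
    unfolding events
    using measure_pmf.prob_compl[of "Pi I (\<lambda>_. - S)" "Pi_pmf I dflt (\<lambda>_. p)"]
    by (simp add: Compl_eq_Diff_UNIV)
qed

lemma Rpoly_1: "Rpoly R dmax 1 = (\<Sum>d = 1..dmax. R d)"
  by (simp add: Rpoly_def)

lemma Rpoly_0: "Rpoly R dmax 0 = 0"
  by (simp add: Rpoly_def)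

lemma pmf_degree_pmf:
  assumes "\<And>d. R d \<ge> 0" "Rpoly R dmax 1 = 1"
  shows "pmf (degree_pmf R dmax) d = (if d \<in> {1..dmax} then R d else 0)"
  unfolding degree_pmf_def
proof (rule pmf_embed_pmf)
  show "\<And>x. 0 \<le> (if x \<in> {1..dmax} then R x else 0)"
    using assms by auto
  have "(\<integral>\<^sup>+x. ennreal (if x \<in> {1..dmax} then R x else 0) \<partial>count_space UNIV)
      = (\<integral>\<^sup>+x. ennreal (R x) \<partial>count_space {1..dmax})"
    by (subst nn_integral_count_space_indicator) (auto intro!: nn_integral_cong split: split_indicator)
  also have "\<dots> = ennreal (\<Sum>d = 1..dmax. R d)"
    using assms by (simp add: nn_integral_count_space_finite sum_ennreal)
  finally show "(\<integral>\<^sup>+x. ennreal (if x \<in> {1..dmax} then R x else 0) \<partial>count_space UNIV) = 1"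
    using assms Rpoly_1 by simp
qed

lemma prob_connected_event_gen_pmf:
  assumes "w \<ge> 1" "\<And>d. R d \<ge> 0" "Rpoly R dmax 1 = 1"
  shows "measure_pmf.prob (gen_pmf R dmax w j) (connected_event L)
       = 1 - Rpoly R dmax (1 - real (card ({j - int w + 1 .. j} \<inter> {0 .. int L - 1})) / real w)"
proof -
  define W where "W = {j - int w + 1 .. j}"
  define x where "x = 1 - real (card (W \<inter> {0 .. int L - 1})) / real w"
  define D where "D = degree_pmf R dmax"
  have pmf_D: "pmf D d = (if d \<in> {1..dmax} then R d else 0)" for d
    unfolding D_def using pmf_degree_pmf[OF assms(2,3)] .
  have set_D: "set_pmf D \<subseteq> {1..dmax}"
    using pmf_D by (auto simp: set_pmf_eq split: if_splits)
  have edges: "measure_pmf.prob (map_pmf (\<lambda>f. (d, f)) (Pi_pmf {..<d} 0 (\<lambda>_. pmf_of_set W)))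
      (connected_event L) = 1 - x ^ d" for d
  proof -
    have preimage: "(\<lambda>f. (d, f)) -` connected_event L = {f. \<exists>k\<in>{..<d}. f k \<in> {0 .. int L - 1}}"
      by (auto simp: connected_event_def)
    have "W \<noteq> {}" "finite W" "card W = w"
      using assms(1) by (auto simp: W_def)
    then show ?thesis
      unfolding measure_map_pmf preimage measure_Pi_pmf_ex_in[OF finite_lessThan] card_lessThan x_def
      by (simp add: measure_pmf_of_set Int_commute)
  qed
  have "measure_pmf.prob (gen_pmf R dmax w j) (connected_event L)
      = (\<Sum>d\<in>set_pmf D. pmf D d * (1 - x ^ d))"
    unfolding gen_pmf_def D_def[symmetric] W_def[symmetric]
    using finite_subset[OF set_D] by (simp only: measure_pmf_bind_finite_support edges finite_atLeastAtMost)
  also have "\<dots> = (\<Sum>d = 1..dmax. pmf D d * (1 - x ^ d))"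
    by (rule sum.mono_neutral_left) (use set_D in \<open>auto simp: set_pmf_eq\<close>)
  also have "\<dots> = Rpoly R dmax 1 - Rpoly R dmax x"
    by (simp add: pmf_D Rpoly_def algebra_simps sum_subtractf)
  finally show ?thesis
    using assms(3) by (simp add: x_def W_def)
qed

lemma sum_window_overlaps:
  fixes \<phi> :: "nat \<Rightarrow> 'a::comm_semiring_1" and w L :: nat
  assumes "w \<ge> 1" "L \<ge> w - 1"
  shows "(\<Sum>j\<in>{0 .. int L + int w - 2}. \<phi> (card ({j - int w + 1 .. j} \<inter> {0 .. int L - 1})))
       = of_nat (L + 1 - w) * \<phi> w + 2 * (\<Sum>c = 1..w - 1. \<phi> c)"
proof -
  let ?overlap = "\<lambda>j::int. card ({j - int w + 1 .. j} \<inter> {0 .. int L - 1})"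
  have split: "{0 .. int L + int w - 2} = {0 .. int w - 2} \<union> ({int w - 1 .. int L - 1} \<union> {int L .. int L + int w - 2})"
    using assms by auto
  have left: "(\<Sum>j\<in>{0 .. int w - 2}. \<phi> (?overlap j)) = (\<Sum>c = 1..w - 1. \<phi> c)"
    by (rule sum.reindex_bij_witness[where i="\<lambda>c. int c - 1" and j="\<lambda>j. nat (j + 1)"])
       (use assms in auto)
  have right: "(\<Sum>j\<in>{int L .. int L + int w - 2}. \<phi> (?overlap j)) = (\<Sum>c = 1..w - 1. \<phi> c)"
    by (rule sum.reindex_bij_witness[where i="\<lambda>c. int L + int w - 1 - int c" and j="\<lambda>j. nat (int L + int w - 1 - j)"])
       (use assms in \<open>auto simp: algebra_simps\<close>)
  have middle: "(\<Sum>j\<in>{int w - 1 .. int L - 1}. \<phi> (?overlap j)) = of_nat (L + 1 - w) * \<phi> w"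
  proof -
    have "(\<Sum>j\<in>{int w - 1 .. int L - 1}. \<phi> (?overlap j)) = (\<Sum>j\<in>{int w - 1 .. int L - 1}. \<phi> w)"
      by (rule sum.cong) (use assms in auto)
    also have "\<dots> = of_nat (L + 1 - w) * \<phi> w"
    proof -
      have "nat (int L - int w + 1) = L + 1 - w" using assms by linarith
      thus ?thesis by simp
    qed
    finally show ?thesis .
  qed
  have "(\<Sum>j\<in>{0 .. int L + int w - 2}. \<phi> (?overlap j))
      = (\<Sum>j\<in>{0 .. int w - 2}. \<phi> (?overlap j)) + ((\<Sum>j\<in>{int w - 1 .. int L - 1}. \<phi> (?overlap j))
          + (\<Sum>j\<in>{int L .. int L + int w - 2}. \<phi> (?overlap j)))"
    unfolding split by (subst sum.union_disjoint; (subst sum.union_disjoint)?) (use assms in auto)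
  thus ?thesis unfolding left middle right by (simp add: algebra_simps mult_2)
qed

theorem lemma1:
  fixes L w m n dmax :: nat and R :: "nat \<Rightarrow> real"
  assumes "w \<ge> 1" and "L \<ge> w - 1"
    and "\<And>d. R d \<ge> 0"
    and "Rpoly R dmax 1 = 1"
  shows "design_rate m n R dmax L w =
    real (m * L) / (real n * (real L - real w + 1)
       + 2 * real n * (\<Sum>i = 1..w - 1. (1 - Rpoly R dmax (real i / real w))))"
proof -
  define \<phi> where "\<phi> c = 1 - Rpoly R dmax (1 - real c / real w)" for c
  have "expected_connected n R dmax L w
      = real n * (\<Sum>j\<in>{0 .. int L + int w - 2}. \<phi> (card ({j - int w + 1 .. j} \<inter> {0 .. int L - 1})))"
    unfolding expected_connected_def sum_distrib_left
    by (intro sum.cong refl) (simp only: prob_connected_event_gen_pmf[OF assms(1,3,4)] \<phi>_def)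
  also have "\<dots> = real n * (real (L + 1 - w) * \<phi> w + 2 * (\<Sum>c = 1..w - 1. \<phi> c))"
    unfolding sum_window_overlaps[OF assms(1,2)] ..
  also have "\<phi> w = 1"
    using assms(1) by (simp add: \<phi>_def Rpoly_0)
  also have "(\<Sum>c = 1..w - 1. \<phi> c) = (\<Sum>i = 1..w - 1. 1 - Rpoly R dmax (real i / real w))"
    by (subst sum.atLeastAtMost_rev) (use assms(1) in \<open>auto simp: \<phi>_def of_nat_diff field_simps intro!: sum.cong\<close>)
  also have "real (L + 1 - w) = real L - real w + 1"
    using assms(1,2) by linarith
  finally show ?thesis
    unfolding design_rate_def by (simp add: algebra_simps)
qed

end
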